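(* For every integer $t$ there exists a finite simple graph $G$ with $\Delta_2(G) \geq t$ and $\chi(G) > \max\{\omega(G), \Delta_2(G)\}$.
   Context: $\chi(G)$ is the chromatic number and $\omega(G)$ the clique number. $\Delta_2(G)$ is the largest degree that a vertex $v$ of $G$ can have subject to the condition that $v$ is adjacent to a vertex whose degree is at least as large as the degree of $v$. *)

theory Defs
  imports Main
begin

definition simple_graph :: "'a set \<Rightarrow> 'a set set \<Rightarrow> bool" where
  "simple_graph V E \<longleftrightarrow> finite V \<and> (\<forall>e\<in>E. e \<subseteq> V \<and> card e = 2)"

definition adj :: "'a set set \<Rightarrow> 'a \<Rightarrow> 'a \<Rightarrow> bool" where
  "adj E u v \<longleftrightarrow> {u, v} \<in> E"

definition degree :: "'a set \<Rightarrow> 'a set set \<Rightarrow> 'a \<Rightarrow> nat" where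
  "degree V E v = card {u \<in> V. adj E v u}"

definition is_clique :: "'a set \<Rightarrow> 'a set set \<Rightarrow> 'a set \<Rightarrow> bool" where
  "is_clique V E K \<longleftrightarrow> K \<subseteq> V \<and> (\<forall>u\<in>K. \<forall>v\<in>K. u \<noteq> v \<longrightarrow> adj E u v)"

definition clique_number :: "'a set \<Rightarrow> 'a set set \<Rightarrow> nat" where
  "clique_number V E = Max {card K | K. is_clique V E K}"

definition proper_colouring :: "'a set \<Rightarrow> 'a set set \<Rightarrow> nat \<Rightarrow> ('a \<Rightarrow> nat) \<Rightarrow> bool" where
  "proper_colouring V E k c \<longleftrightarrow>
     (\<forall>v\<in>V. c v < k) \<and> (\<forall>u\<in>V. \<forall>v\<in>V. adj E u v \<longrightarrow> c u \<noteq> c v)"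

definition chromatic_number :: "'a set \<Rightarrow> 'a set set \<Rightarrow> nat" where
  "chromatic_number V E = (LEAST k. \<exists>c. proper_colouring V E k c)"

definition Delta2 :: "'a set \<Rightarrow> 'a set set \<Rightarrow> nat" where
  "Delta2 V E = Max (insert 0 {degree V E v | v. v \<in> V \<and>
       (\<exists>u\<in>V. adj E v u \<and> degree V E u \<ge> degree V E v)})"

end

theory Submission
  imports Defs
begin

text \<open>Take two disjoint copies \<open>A = {1..n}\<close> and \<open>B = {n+1..2n}\<close> of \<open>K\<^sub>n\<close>, joined by the
  single edge \<open>{1, n+1}\<close>, and a hub \<open>0\<close> adjacent to every other vertex except \<open>1\<close> and
  \<open>n+1\<close>. All vertices but the hub have degree \<open>n\<close>, while the hub has degree \<open>2n - 2 > n\<close>,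
  so \<open>\<Delta>\<^sub>2 = n\<close>; every clique lies in \<open>A\<close>, in \<open>B\<close>, in \<open>{1, n+1}\<close> or in the hub together
  with its neighbours in one block, so \<open>\<omega> = n\<close>. In an \<open>n\<close>-colouring both \<open>A\<close> and \<open>B\<close> use
  every colour, so the colour of the hub reappears on its only non-neighbours \<open>1\<close> and \<open>n+1\<close>,
  which are adjacent; hence \<open>\<chi> > n\<close>.\<close>

lemma proper_colouring_mono:
  assumes "proper_colouring V E k c" "k \<le> m"
  shows "proper_colouring V E m c"
  using assms unfolding proper_colouring_def by fastforce

lemma chromatic_number_gt:
  assumes colourable: "\<exists>c. proper_colouring V E m c"
    and no_colouring: "\<And>c. \<not> proper_colouring V E k c"
  shows "k < chromatic_number V E"
proof (rule ccontr)
  assume "\<not> k < chromatic_number V E"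
  moreover have "\<exists>c. proper_colouring V E (chromatic_number V E) c"
    unfolding chromatic_number_def by (rule LeastI_ex) (use colourable in blast)
  ultimately show False
    using proper_colouring_mono no_colouring by (metis not_less)
qed

lemma proper_colouring_clique_surj:
  assumes "proper_colouring V E k c" "is_clique V E K" "finite K" "card K = k"
  shows "c ` K = {..<k}"
proof (rule card_subset_eq)
  have "inj_on c K"
    using assms(1,2) unfolding inj_on_def proper_colouring_def is_clique_def by blast
  then show "card (c ` K) = card {..<k}"
    using assms(4) by (simp add: card_image)
  show "c ` K \<subseteq> {..<k}"
    using assms(1,2) unfolding proper_colouring_def is_clique_def by auto
qed simp

lemma clique_number_le:
  assumes "\<And>K. is_clique V E K \<Longrightarrow> card K \<le> m"
  shows "clique_number V E \<le> m"
proof -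
  have "is_clique V E {}"
    by (simp add: is_clique_def)
  moreover have "{card K | K. is_clique V E K} \<subseteq> {..m}"
    using assms by auto
  ultimately show ?thesis
    unfolding clique_number_def using assms
    by (subst Max_le_iff) (auto dest: finite_subset)
qed

lemma Delta2_eqI:
  assumes witness: "v \<in> V" "u \<in> V" "adj E v u" "degree V E v = d" "d \<le> degree V E u"
    and bound: "\<And>v u. v \<in> V \<Longrightarrow> u \<in> V \<Longrightarrow> adj E v u \<Longrightarrow> degree V E v \<le> degree V E u
                  \<Longrightarrow> degree V E v \<le> d"
  shows "Delta2 V E = d"
proof -
  let ?D = "{degree V E v | v. v \<in> V \<and> (\<exists>u\<in>V. adj E v u \<and> degree V E u \<ge> degree V E v)}"
  have "d \<in> ?D"
    using witness by blast
  moreover have "?D \<subseteq> {..d}"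
    using bound by auto
  ultimately show ?thesis
    unfolding Delta2_def by (intro Max_eqI) (auto dest: finite_subset)
qed

definition linked_cliques_adj :: "nat \<Rightarrow> nat \<Rightarrow> nat \<Rightarrow> bool" where
  "linked_cliques_adj n u v \<longleftrightarrow> u \<noteq> v \<and>
     ((u \<in> {1..n} \<and> v \<in> {1..n}) \<or> (u \<in> {n+1..2*n} \<and> v \<in> {n+1..2*n}) \<or>
      (u = 1 \<and> v = n+1) \<or> (u = n+1 \<and> v = 1) \<or>
      (u = 0 \<and> v \<in> {2..n} \<union> {n+2..2*n}) \<or> (v = 0 \<and> u \<in> {2..n} \<union> {n+2..2*n}))"

definition linked_cliques_verts :: "nat \<Rightarrow> nat set" where
  "linked_cliques_verts n = {0..2*n}"

definition linked_cliques_edges :: "nat \<Rightarrow> nat set set" where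
  "linked_cliques_edges n = {{u, v} | u v. linked_cliques_adj n u v}"

lemma linked_cliques_adj_commute: "linked_cliques_adj n u v = linked_cliques_adj n v u"
  unfolding linked_cliques_adj_def by auto

lemma adj_linked_cliques_edges: "adj (linked_cliques_edges n) u v \<longleftrightarrow> linked_cliques_adj n u v"
  unfolding adj_def linked_cliques_edges_def
  by (auto simp: doubleton_eq_iff linked_cliques_adj_commute)

lemma simple_graph_linked_cliques:
  "simple_graph (linked_cliques_verts n) (linked_cliques_edges n)"
  unfolding simple_graph_def linked_cliques_verts_def linked_cliques_edges_def
  by (auto simp: linked_cliques_adj_def card_2_iff)

lemma degree_linked_cliques_hub:
  assumes "n \<ge> 1"
  shows "degree (linked_cliques_verts n) (linked_cliques_edges n) 0 = 2*n - 2"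
proof -
  have "{u \<in> linked_cliques_verts n. adj (linked_cliques_edges n) 0 u} = {2..n} \<union> {n+2..2*n}"
    unfolding adj_linked_cliques_edges linked_cliques_verts_def linked_cliques_adj_def by auto
  moreover have "card ({2..n} \<union> {n+2..2*n}) = (n - 1) + (n - 1)"
    by (subst card_Un_disjoint) auto
  ultimately show ?thesis
    unfolding degree_def using assms by simp
qed

lemma degree_linked_cliques_block:
  assumes "v \<in> {1..2*n}"
  shows "degree (linked_cliques_verts n) (linked_cliques_edges n) v = n"
proof -
  define block where "block = (if v \<le> n then {1..n} else {n+1..2*n})"
  define partner where "partner = (if v = 1 then n+1 else if v = n+1 then 1 else 0)"
  have "{u \<in> linked_cliques_verts n. adj (linked_cliques_edges n) v u} = insert partner (block - {v})"
    using assms unfolding adj_linked_cliques_edges linked_cliques_verts_def linked_cliques_adj_def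
      block_def partner_def by auto
  moreover have "partner \<notin> block" "v \<in> block" "finite block" "card block = n" "n \<ge> 1"
    using assms unfolding block_def partner_def by auto
  ultimately show ?thesis
    unfolding degree_def by (simp add: card_Diff_singleton)
qed

lemma Delta2_linked_cliques:
  assumes "n \<ge> 3"
  shows "Delta2 (linked_cliques_verts n) (linked_cliques_edges n) = n"
proof (rule Delta2_eqI)
  show "1 \<in> linked_cliques_verts n" "2 \<in> linked_cliques_verts n"
    "adj (linked_cliques_edges n) 1 2"
    using assms by (auto simp: linked_cliques_verts_def adj_linked_cliques_edges linked_cliques_adj_def)
  show "degree (linked_cliques_verts n) (linked_cliques_edges n) 1 = n"
    "n \<le> degree (linked_cliques_verts n) (linked_cliques_edges n) 2"
    using assms by (simp_all add: degree_linked_cliques_block)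
next
  fix v u
  assume "v \<in> linked_cliques_verts n" "u \<in> linked_cliques_verts n"
    "adj (linked_cliques_edges n) v u"
    "degree (linked_cliques_verts n) (linked_cliques_edges n) v
       \<le> degree (linked_cliques_verts n) (linked_cliques_edges n) u"
  then show "degree (linked_cliques_verts n) (linked_cliques_edges n) v \<le> n"
    using assms degree_linked_cliques_hub[of n] degree_linked_cliques_block[of _ n]
    by (cases "v = 0"; cases "u = 0")
      (auto simp: linked_cliques_verts_def adj_linked_cliques_edges linked_cliques_adj_def)
qed

lemma linked_cliques_clique_cases:
  assumes "is_clique (linked_cliques_verts n) (linked_cliques_edges n) K"
  shows "K \<subseteq> {1..n} \<or> K \<subseteq> {n+1..2*n} \<or> K \<subseteq> {1, n+1} \<or>
         K \<subseteq> insert 0 {2..n} \<or> K \<subseteq> insert 0 {n+2..2*n}"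
proof -
  have K_verts: "K \<subseteq> {0..2*n}"
    and K_adj: "\<And>u v. u \<in> K \<Longrightarrow> v \<in> K \<Longrightarrow> u \<noteq> v \<Longrightarrow> linked_cliques_adj n u v"
    using assms unfolding is_clique_def linked_cliques_verts_def adj_linked_cliques_edges by auto
  show ?thesis
  proof (cases "0 \<in> K")
    case True
    have "K \<subseteq> insert 0 ({2..n} \<union> {n+2..2*n})"
    proof
      fix x
      assume "x \<in> K"
      then show "x \<in> insert 0 ({2..n} \<union> {n+2..2*n})"
        using K_adj[OF True, of x] by (cases "x = 0") (auto simp: linked_cliques_adj_def)
    qed
    moreover have "\<not> (\<exists>a\<in>K. \<exists>b\<in>K. a \<in> {2..n} \<and> b \<in> {n+2..2*n})"
      using K_adj by (fastforce simp: linked_cliques_adj_def)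
    ultimately show ?thesis
      by blast
  next
    case False
    have K_blocks: "K \<subseteq> {1..n} \<union> {n+1..2*n}"
    proof
      fix x
      assume "x \<in> K"
      then have "x \<noteq> 0"
        using False by (cases "x = 0") simp_all
      moreover have "x \<le> 2*n"
        using K_verts \<open>x \<in> K\<close> by auto
      ultimately show "x \<in> {1..n} \<union> {n+1..2*n}"
        by auto
    qed
    show ?thesis
    proof (cases "\<exists>a\<in>K. \<exists>b\<in>K. a \<in> {1..n} \<and> b \<in> {n+1..2*n}")
      case True
      then obtain a b where ab: "a \<in> K" "b \<in> K" "a \<in> {1..n}" "b \<in> {n+1..2*n}"
        by blast
      then have "a = 1" "b = n+1"
        using K_adj[of a b] by (auto simp: linked_cliques_adj_def)
      have "K \<subseteq> {1, n+1}"
      proof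
        fix z
        assume "z \<in> K"
        show "z \<in> {1, n+1}"
        proof (rule ccontr)
          assume "z \<notin> {1, n+1}"
          then have "linked_cliques_adj n z 1" "linked_cliques_adj n z (n+1)"
            using K_adj \<open>z \<in> K\<close> ab \<open>a = 1\<close> \<open>b = n+1\<close> by auto
          then show False
            by (auto simp: linked_cliques_adj_def)
        qed
      qed
      then show ?thesis
        by blast
    next
      case False
      then show ?thesis
        using K_blocks by blast
    qed
  qed
qed

lemma linked_cliques_clique_card_le:
  assumes "n \<ge> 2" "is_clique (linked_cliques_verts n) (linked_cliques_edges n) K"
  shows "card K \<le> n"
proof -
  have "card {1, n+1} \<le> n" "card (insert 0 {2..n}) = n" "card (insert 0 {n+2..2*n}) = n"
    using assms(1) by (simp_all add: card_insert_le_m1)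
  then show ?thesis
    using linked_cliques_clique_cases[OF assms(2)]
    by (elim disjE) (auto dest!: card_mono[rotated])
qed

lemma linked_cliques_not_colourable:
  "\<not> proper_colouring (linked_cliques_verts n) (linked_cliques_edges n) n c"
proof
  assume colouring: "proper_colouring (linked_cliques_verts n) (linked_cliques_edges n) n c"
  then have distinct: "\<And>u v. u \<le> 2*n \<Longrightarrow> v \<le> 2*n \<Longrightarrow> linked_cliques_adj n u v \<Longrightarrow> c u \<noteq> c v"
    unfolding proper_colouring_def linked_cliques_verts_def adj_linked_cliques_edges by auto
  have "c 0 < n"
    using colouring unfolding proper_colouring_def linked_cliques_verts_def by auto
  moreover have "c ` {1..n} = {..<n}"
    by (rule proper_colouring_clique_surj[OF colouring])
      (auto simp: is_clique_def linked_cliques_verts_def adj_linked_cliques_edges linked_cliques_adj_def)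
  moreover have "c ` {n+1..2*n} = {..<n}"
    by (rule proper_colouring_clique_surj[OF colouring])
      (auto simp: is_clique_def linked_cliques_verts_def adj_linked_cliques_edges linked_cliques_adj_def)
  ultimately obtain a b where ab: "a \<in> {1..n}" "b \<in> {n+1..2*n}" "c a = c 0" "c b = c 0"
    by (metis imageE lessThan_iff)
  have "a = 1"
  proof (rule ccontr)
    assume "a \<noteq> 1"
    then have "linked_cliques_adj n 0 a"
      using ab by (auto simp: linked_cliques_adj_def)
    then show False
      using ab distinct[of 0 a] by auto
  qed
  have "b = n+1"
  proof (rule ccontr)
    assume "b \<noteq> n+1"
    then have "linked_cliques_adj n 0 b"
      using ab by (auto simp: linked_cliques_adj_def)
    then show False
      using ab distinct[of 0 b] by auto
  qed
  show False
    using ab \<open>a = 1\<close> \<open>b = n+1\<close> distinct[of 1 "n+1"] by (auto simp: linked_cliques_adj_def)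
qed

lemma linked_cliques_colourable:
  assumes "n \<ge> 2"
  shows "\<exists>c. proper_colouring (linked_cliques_verts n) (linked_cliques_edges n) (n+1) c"
proof
  \<comment> \<open>the hub gets the extra colour \<open>n\<close>; \<open>B\<close> is coloured with a cyclic shift, so that the
    bridge ends \<open>1\<close> and \<open>n+1\<close> receive colours \<open>0\<close> and \<open>1\<close>\<close>
  define c where
    "c v = (if v = 0 then n else if v \<le> n then v - 1 else if v = 2*n then 0 else v - n)" for v
  show "proper_colouring (linked_cliques_verts n) (linked_cliques_edges n) (n+1) c"
    using assms unfolding proper_colouring_def linked_cliques_verts_def adj_linked_cliques_edges
      linked_cliques_adj_def c_def by auto
qed

theorem mainTheorem7:
  fixes t :: int
  shows "\<exists>(V :: nat set) E. simple_graph V E \<and> int (Delta2 V E) \<ge> t \<and>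
           chromatic_number V E > max (clique_number V E) (Delta2 V E)"
proof -
  define n where "n = max 3 (nat t)"
  have "n \<ge> 3" "int n \<ge> t"
    unfolding n_def by auto
  moreover have "clique_number (linked_cliques_verts n) (linked_cliques_edges n) \<le> n"
    using \<open>n \<ge> 3\<close> by (intro clique_number_le linked_cliques_clique_card_le) auto
  moreover have "n < chromatic_number (linked_cliques_verts n) (linked_cliques_edges n)"
    using \<open>n \<ge> 3\<close> linked_cliques_colourable[of n]
    by (intro chromatic_number_gt[where m = "n+1"] linked_cliques_not_colourable) auto
  ultimately show ?thesis
    using simple_graph_linked_cliques[of n] Delta2_linked_cliques[of n]
    by (intro exI[of _ "linked_cliques_verts n"] exI[of _ "linked_cliques_edges n"]) auto
qed

end
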